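(* Let $V$ be a complex vector space with a quadratic form $f$, and let $V=V_0\supset V_1\supset V_2\supset\cdots$ be a descending chain of subspaces with $\dim_{\mathbb{C}}(V/V_i)<\infty$ for all $i\ge0$ and $\bigcap_{i\ge0}V_i=(0)$. For each $i$, let $Cl(V_i)$ denote the subalgebra of the Clifford algebra $Cl(V,f)$ generated by $1$ and $V_i$ (i.e. $Cl(V_i,f|_{V_i})$). Then $$\bigcap_{i\ge0}Cl(V_i)=\mathbb{C}\cdot1.$$
   Context: A quadratic form on $V$ is a map $f:V\to\mathbb{C}$ with $f(\alpha v)=\alpha^2f(v)$ such that $f(u,v)=f(u+v)-f(u)-f(v)$ is bilinear. The Clifford algebra $Cl(V,f)$ is the unital associative algebra generated by $V$ and $1$ subject to $v^2=f(v)\cdot1$ for $v\in V$. *)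

theory Defs
  imports Complex_Main
begin

text \<open>
  The Clifford algebra Cl(V,f) is constructed concretely as
  the quotient of the free associative algebra on the set V (finitely supported
  functions 'v list => complex, words = noncommutative monomials) by the two-sided
  ideal generated by the linearity relations and the Clifford relations v v = f(v) 1.
\<close>

definition quadratic_form :: "(complex \<Rightarrow> 'v \<Rightarrow> 'v) \<Rightarrow> ('v::ab_group_add \<Rightarrow> complex) \<Rightarrow> bool" where
  "quadratic_form scale f \<longleftrightarrow>
     (\<forall>a v. f (scale a v) = a^2 * f v) \<and>
     (let B = (\<lambda>u v. f (u + v) - f u - f v) in
        (\<forall>u1 u2 v. B (u1 + u2) v = B u1 v + B u2 v) \<and>
        (\<forall>a u v. B (scale a u) v = a * B u v) \<and>
        (\<forall>u v1 v2. B u (v1 + v2) = B u v1 + B u v2) \<and>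
        (\<forall>a u v. B u (scale a v) = a * B u v))"

definition fin_supp :: "('v list \<Rightarrow> complex) \<Rightarrow> bool" where
  "fin_supp p \<longleftrightarrow> finite {w. p w \<noteq> 0}"

definition word :: "'v list \<Rightarrow> 'v list \<Rightarrow> complex" where
  "word w = (\<lambda>u. if u = w then 1 else 0)"

definition fmul :: "('v list \<Rightarrow> complex) \<Rightarrow> ('v list \<Rightarrow> complex) \<Rightarrow> 'v list \<Rightarrow> complex" where
  "fmul p q = (\<lambda>w. \<Sum>k\<le>length w. p (take k w) * q (drop k w))"

definition fadd :: "('v list \<Rightarrow> complex) \<Rightarrow> ('v list \<Rightarrow> complex) \<Rightarrow> 'v list \<Rightarrow> complex" where
  "fadd p q = (\<lambda>w. p w + q w)"

definition fsmult :: "complex \<Rightarrow> ('v list \<Rightarrow> complex) \<Rightarrow> 'v list \<Rightarrow> complex" where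
  "fsmult c p = (\<lambda>w. c * p w)"

definition fsub :: "('v list \<Rightarrow> complex) \<Rightarrow> ('v list \<Rightarrow> complex) \<Rightarrow> 'v list \<Rightarrow> complex" where
  "fsub p q = (\<lambda>w. p w - q w)"

inductive_set clifford_ideal :: "(complex \<Rightarrow> 'v \<Rightarrow> 'v) \<Rightarrow> ('v::ab_group_add \<Rightarrow> complex)
     \<Rightarrow> ('v list \<Rightarrow> complex) set"
  for scale f where
  rel_add: "fsub (fsub (word [u + v]) (word [u])) (word [v]) \<in> clifford_ideal scale f"
| rel_smult: "fsub (word [scale c v]) (fsmult c (word [v])) \<in> clifford_ideal scale f"
| rel_sq: "fsub (word [v, v]) (fsmult (f v) (word [])) \<in> clifford_ideal scale f"
| zero: "(\<lambda>w. 0) \<in> clifford_ideal scale f"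
| add: "p \<in> clifford_ideal scale f \<Longrightarrow> q \<in> clifford_ideal scale f \<Longrightarrow> fadd p q \<in> clifford_ideal scale f"
| smult: "p \<in> clifford_ideal scale f \<Longrightarrow> fsmult c p \<in> clifford_ideal scale f"
| lmult: "p \<in> clifford_ideal scale f \<Longrightarrow> fmul (word w) p \<in> clifford_ideal scale f"
| rmult: "p \<in> clifford_ideal scale f \<Longrightarrow> fmul p (word w) \<in> clifford_ideal scale f"

definition cl_class :: "(complex \<Rightarrow> 'v \<Rightarrow> 'v) \<Rightarrow> ('v::ab_group_add \<Rightarrow> complex)
     \<Rightarrow> ('v list \<Rightarrow> complex) \<Rightarrow> ('v list \<Rightarrow> complex) set" where
  "cl_class scale f p = {q. fin_supp q \<and> fsub p q \<in> clifford_ideal scale f}"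

definition clifford :: "(complex \<Rightarrow> 'v \<Rightarrow> 'v) \<Rightarrow> ('v::ab_group_add \<Rightarrow> complex)
     \<Rightarrow> ('v list \<Rightarrow> complex) set set" where
  "clifford scale f = cl_class scale f ` {p. fin_supp p}"

definition cl_sub :: "(complex \<Rightarrow> 'v \<Rightarrow> 'v) \<Rightarrow> ('v::ab_group_add \<Rightarrow> complex) \<Rightarrow> 'v set
     \<Rightarrow> ('v list \<Rightarrow> complex) set set" where
  "cl_sub scale f W =
     cl_class scale f ` {p. fin_supp p \<and> (\<forall>w. p w \<noteq> 0 \<longrightarrow> set w \<subseteq> W)}"

definition cl_scalars :: "(complex \<Rightarrow> 'v \<Rightarrow> 'v) \<Rightarrow> ('v::ab_group_add \<Rightarrow> complex)
     \<Rightarrow> ('v list \<Rightarrow> complex) set set" where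
  "cl_scalars scale f = (\<lambda>c. cl_class scale f (fsmult c (word []))) ` UNIV"

end

theory Submission
  imports Defs
begin

text \<open>For a finite independent list es, Chevalley's construction turns the exterior
  algebra on es into a module over the Clifford algebra of span es: v acts by the sum of its
  coordinates times e_j \<and> - plus a contraction, taken with respect to a triangular form whose
  symmetrisation is the polar form of f. Reordering words with the Clifford relations shows that
  every element of the free algebra on span es is congruent to the ordered lift of its action on 1.
  Now let x be represented both by p with letters in U and by q with letters in W, where
  span U \<inter> span W = 0, and choose es containing bases of the letters of p and of q. The action of
  x on 1 is then supported on monomials in the first basis and in the second basis, so it is a
  multiple of 1, and hence so is x. For the theorem, the letters of a representative of x span a
  finite-dimensional space, which meets some V i trivially because the V i decrease to 0.\<close>

section \<open>Chevalley's operators on an exterior algebra\<close>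

text \<open>An element g of the exterior algebra on e_0, ..., e_(n-1) is given by its coefficients:
  g T is the coefficient of e_T = e_t1 \<and> ... \<and> e_tk for T = {t1 < ... < tk}.
  Moving e_a to its place in e_T costs the sign wedge_sign a T.\<close>

type_synonym ext = "nat set \<Rightarrow> complex"

definition wedge_sign :: "nat \<Rightarrow> nat set \<Rightarrow> complex" where
  "wedge_sign a T = (-1) ^ card {t\<in>T. t < a}"

definition wedge :: "nat \<Rightarrow> ext \<Rightarrow> ext" where
  "wedge j g = (\<lambda>T. if j \<in> T then wedge_sign j T * g (T - {j}) else 0)"

text \<open>Interior product with the linear form e_a \<mapsto> \<beta> k a.\<close>

definition contract :: "nat \<Rightarrow> (nat \<Rightarrow> nat \<Rightarrow> complex) \<Rightarrow> nat \<Rightarrow> ext \<Rightarrow> ext" where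
  "contract n \<beta> k g = (\<lambda>T. \<Sum>a\<in>{..<n} - T. wedge_sign a T * \<beta> k a * g (insert a T))"

definition chevalley :: "nat \<Rightarrow> (nat \<Rightarrow> nat \<Rightarrow> complex) \<Rightarrow> nat \<Rightarrow> ext \<Rightarrow> ext" where
  "chevalley n \<beta> j g = (\<lambda>T. wedge j g T + contract n \<beta> j g T)"

definition ext_monomial :: "nat set \<Rightarrow> ext" where
  "ext_monomial S = (\<lambda>T. if T = S then 1 else 0)"

lemma wedge_sign_square: "wedge_sign a T * wedge_sign a T = 1"
  by (simp add: wedge_sign_def flip: power_add mult_2 power_mult)

lemma wedge_sign_insert_self: "wedge_sign a (insert a T) = wedge_sign a T"
  unfolding wedge_sign_def by (rule arg_cong[where f="\<lambda>x. (-1)^card x"]) auto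

lemma wedge_sign_remove_self: "wedge_sign a (T - {a}) = wedge_sign a T"
  unfolding wedge_sign_def by (rule arg_cong[where f="\<lambda>x. (-1)^card x"]) auto

lemma wedge_sign_insert:
  assumes "a \<notin> T" "a \<noteq> b"
  shows "wedge_sign b (insert a T) = (if a < b then - wedge_sign b T else wedge_sign b T)"
proof (cases "a < b")
  case True
  have "{t\<in>insert a T. t < b} = insert a {t\<in>T. t < b}" using True by auto
  moreover have "finite {t\<in>T. t < b}" by (rule finite_subset[of _ "{..<b}"]) auto
  ultimately show ?thesis using True assms by (simp add: wedge_sign_def)
next
  case False
  have "{t\<in>insert a T. t < b} = {t\<in>T. t < b}" using False by auto
  then show ?thesis using False by (simp add: wedge_sign_def)
qed

lemma wedge_sign_remove:
  assumes "a \<in> T" "a \<noteq> b"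
  shows "wedge_sign b (T - {a}) = (if a < b then - wedge_sign b T else wedge_sign b T)"
  using wedge_sign_insert[of a "T - {a}" b] assms by (auto simp: insert_absorb)

lemma wedge_sign_eq_1: "(\<And>t. t \<in> T \<Longrightarrow> j \<le> t) \<Longrightarrow> wedge_sign j T = 1"
  unfolding wedge_sign_def by (metis (no_types, lifting) Collect_empty_eq card.empty leD power_0)

lemma wedge_add: "wedge j (\<lambda>T. g T + h T) T = wedge j g T + wedge j h T"
  by (simp add: wedge_def algebra_simps)

lemma contract_add: "contract n \<beta> j (\<lambda>T. g T + h T) T = contract n \<beta> j g T + contract n \<beta> j h T"
  by (simp add: contract_def algebra_simps sum.distrib)

lemma wedge_wedge_anticomm: "wedge j (wedge k g) T + wedge k (wedge j g) T = 0"
proof (cases "j \<noteq> k \<and> j \<in> T \<and> k \<in> T")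
  case True
  have "T - {j} - {k} = T - {k} - {j}" by auto
  then have "wedge j (wedge k g) T + wedge k (wedge j g) T
      = (wedge_sign k (T - {j}) * wedge_sign j T + wedge_sign j (T - {k}) * wedge_sign k T) * g (T - {j} - {k})"
    using True by (simp add: wedge_def distrib_right)
  also have "wedge_sign k (T - {j}) * wedge_sign j T + wedge_sign j (T - {k}) * wedge_sign k T = 0"
    using wedge_sign_remove[of j T k] wedge_sign_remove[of k T j] True by (cases "j < k") auto
  finally show ?thesis by simp
qed (auto simp: wedge_def)

lemma wedge_contract_anticomm_mem:
  assumes "j < n" "j \<in> T"
  shows "wedge j (contract n \<beta> k g) T + contract n \<beta> k (wedge j g) T = \<beta> k j * g T"
proof -
  have fin: "finite ({..<n} - T)" and j: "j \<notin> {..<n} - T" using assms(2) by auto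
  have "{..<n} - (T - {j}) = insert j ({..<n} - T)" using assms(2) assms by auto
  then have "wedge j (contract n \<beta> k g) T
      = wedge_sign j T * (wedge_sign j (T - {j}) * \<beta> k j * g (insert j (T - {j})))
      + (\<Sum>a\<in>{..<n} - T. wedge_sign j T * wedge_sign a (T - {j}) * \<beta> k a * g (insert a (T - {j})))"
    using assms(2) by (simp add: wedge_def contract_def sum.insert[OF fin j] distrib_left sum_distrib_left mult.assoc)
  also have "wedge_sign j T * (wedge_sign j (T - {j}) * \<beta> k j * g (insert j (T - {j}))) = \<beta> k j * g T"
  proof -
    have "insert j (T - {j}) = T" using assms(2) by auto
    then show ?thesis using wedge_sign_square[of j T] by (simp add: wedge_sign_remove_self)
  qed
  also have "(\<Sum>a\<in>{..<n} - T. wedge_sign j T * wedge_sign a (T - {j}) * \<beta> k a * g (insert a (T - {j})))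
      = - contract n \<beta> k (wedge j g) T"
    unfolding contract_def wedge_def sum_negf[symmetric]
  proof (rule sum.cong[OF refl])
    fix a assume "a \<in> {..<n} - T"
    then have a: "a \<noteq> j" "a \<notin> T" using assms(2) by auto
    have e: "insert a (T - {j}) = insert a T - {j}" using a by auto
    have "wedge_sign j T * wedge_sign a (T - {j}) = - (wedge_sign a T * wedge_sign j (insert a T))"
      using wedge_sign_remove[of j T a] wedge_sign_insert[of a T j] a assms(2) by (cases "a < j") auto
    then show "wedge_sign j T * wedge_sign a (T - {j}) * \<beta> k a * g (insert a (T - {j})) =
      - (wedge_sign a T * \<beta> k a * (if j \<in> insert a T then wedge_sign j (insert a T) * g (insert a T - {j}) else 0))"
      using assms(2) e by (simp add: algebra_simps)
  qed
  finally show ?thesis by simp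
qed

lemma contract_wedge_not_mem:
  assumes "j < n" "j \<notin> T"
  shows "contract n \<beta> k (wedge j g) T = \<beta> k j * g T"
proof -
  have fin: "finite ({..<n} - T)" and j: "j \<in> {..<n} - T" using assms by auto
  have "contract n \<beta> k (wedge j g) T
      = (\<Sum>a\<in>{..<n} - T. wedge_sign a T * \<beta> k a *
          (if j \<in> insert a T then wedge_sign j (insert a T) * g (insert a T - {j}) else 0))"
    by (simp add: contract_def wedge_def)
  also have "\<dots> = wedge_sign j T * \<beta> k j * (wedge_sign j (insert j T) * g (insert j T - {j}))"
    using assms(2) by (subst sum.remove[OF fin j]) (auto intro!: sum.neutral)
  also have "\<dots> = \<beta> k j * g T"
  proof -
    have "insert j T - {j} = T" using assms(2) by auto
    then show ?thesis using wedge_sign_square[of j T] by (simp add: wedge_sign_insert_self algebra_simps)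
  qed
  finally show ?thesis .
qed

lemma wedge_contract_anticomm:
  assumes "j < n"
  shows "wedge j (contract n \<beta> k g) T + contract n \<beta> k (wedge j g) T = \<beta> k j * g T"
proof (cases "j \<in> T")
  case False
  then have "wedge j (contract n \<beta> k g) T = 0" by (simp add: wedge_def)
  then show ?thesis using contract_wedge_not_mem[OF assms False] by simp
qed (rule wedge_contract_anticomm_mem[OF assms])

lemma contract_contract_anticomm:
  "contract n \<beta> j (contract n \<beta> k g) T + contract n \<beta> k (contract n \<beta> j g) T = 0"
proof -
  define S where "S = {..<n} - T"
  define F where "F a b = wedge_sign a T * wedge_sign b (insert a T) * g (insert b (insert a T))" for a b
  have F_swap: "F b a = - F a b" if "a \<in> S" "b \<in> S" "a \<noteq> b" for a b
  proof -
    have "a \<notin> T" "b \<notin> T" using that by (auto simp: S_def)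
    then have "wedge_sign b T * wedge_sign a (insert b T) = - (wedge_sign a T * wedge_sign b (insert a T))"
      using wedge_sign_insert[of a T b] wedge_sign_insert[of b T a] that(3) by (cases "a < b") auto
    moreover have "insert b (insert a T) = insert a (insert b T)" by auto
    ultimately show ?thesis unfolding F_def by simp
  qed
  have expand: "contract n \<beta> j (contract n \<beta> k g) T
      = (\<Sum>a\<in>S. \<Sum>b\<in>S. if b = a then 0 else \<beta> j a * \<beta> k b * F a b)" for j k
  proof -
    have remove: "{..<n} - insert a T = S - {a}" for a by (auto simp: S_def)
    have sum_remove: "(\<Sum>b\<in>S - {a}. h b) = (\<Sum>b\<in>S. if b = a then 0 else h b)" for a h
      by (rule sum.mono_neutral_cong_left) (auto simp: S_def)
    have "contract n \<beta> j (contract n \<beta> k g) T = (\<Sum>a\<in>S. wedge_sign a T * \<beta> j a *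
        (\<Sum>b\<in>S. if b = a then 0 else wedge_sign b (insert a T) * \<beta> k b * g (insert b (insert a T))))"
      unfolding contract_def S_def[symmetric] remove sum_remove by simp
    also have "\<dots> = (\<Sum>a\<in>S. \<Sum>b\<in>S. if b = a then 0 else \<beta> j a * \<beta> k b * F a b)"
      unfolding sum_distrib_left by (intro sum.cong refl) (simp add: F_def mult_ac)
    finally show ?thesis .
  qed
  have "contract n \<beta> k (contract n \<beta> j g) T = (\<Sum>a\<in>S. \<Sum>b\<in>S. if a = b then 0 else \<beta> k b * \<beta> j a * F b a)"
    unfolding expand by (rule sum.swap)
  also have "\<dots> = - (\<Sum>a\<in>S. \<Sum>b\<in>S. if b = a then 0 else \<beta> j a * \<beta> k b * F a b)"
    unfolding sum_negf[symmetric]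
  proof (intro sum.cong refl)
    fix a b assume "a \<in> S" "b \<in> S"
    then show "(if a = b then 0 else \<beta> k b * \<beta> j a * F b a) = - (if b = a then 0 else \<beta> j a * \<beta> k b * F a b)"
      using F_swap[of a b] by auto
  qed
  finally show ?thesis by (simp add: expand)
qed

theorem chevalley_anticomm:
  assumes "j < n" "k < n"
  shows "chevalley n \<beta> j (chevalley n \<beta> k g) T + chevalley n \<beta> k (chevalley n \<beta> j g) T
    = (\<beta> k j + \<beta> j k) * g T"
proof -
  have expand: "chevalley n \<beta> j (chevalley n \<beta> k g) T
      = wedge j (wedge k g) T + wedge j (contract n \<beta> k g) T
      + (contract n \<beta> j (wedge k g) T + contract n \<beta> j (contract n \<beta> k g) T)" for j k
    unfolding chevalley_def wedge_add contract_add by simp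
  have ww: "wedge k (wedge j g) T = - wedge j (wedge k g) T"
    using wedge_wedge_anticomm[of j k g T] by (simp add: eq_neg_iff_add_eq_0 add.commute)
  have cc: "contract n \<beta> k (contract n \<beta> j g) T = - contract n \<beta> j (contract n \<beta> k g) T"
    using contract_contract_anticomm[of n \<beta> j k g T] by (simp add: eq_neg_iff_add_eq_0 add.commute)
  have wc: "wedge j (contract n \<beta> k g) T = \<beta> k j * g T - contract n \<beta> k (wedge j g) T"
    and cw: "wedge k (contract n \<beta> j g) T = \<beta> j k * g T - contract n \<beta> j (wedge k g) T"
    using wedge_contract_anticomm[OF assms(1), of \<beta> k g T] wedge_contract_anticomm[OF assms(2), of \<beta> j g T]
    by (simp_all add: eq_diff_eq)
  show ?thesis
    unfolding expand ww cc wc cw by (simp add: algebra_simps)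
qed

lemma chevalley_add: "chevalley n \<beta> j (\<lambda>T. g T + h T) T = chevalley n \<beta> j g T + chevalley n \<beta> j h T"
  by (simp add: chevalley_def wedge_add contract_add)

lemma chevalley_scale: "chevalley n \<beta> j (\<lambda>T. c * g T) T = c * chevalley n \<beta> j g T"
  by (simp add: chevalley_def wedge_def contract_def sum_distrib_left algebra_simps)

lemma chevalley_sum: "chevalley n \<beta> j (\<lambda>T. \<Sum>k\<in>K. h k T) T = (\<Sum>k\<in>K. chevalley n \<beta> j (h k) T)"
proof (induction K rule: infinite_finite_induct)
  case (insert x F)
  then show ?case by (simp add: chevalley_add)
qed (simp_all add: chevalley_def wedge_def contract_def)

lemma chevalley_support:
  assumes "\<And>T. g T \<noteq> 0 \<Longrightarrow> T \<subseteq> A" "chevalley n \<beta> j g T \<noteq> 0"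
  shows "T \<subseteq> insert j A"
proof (rule ccontr)
  assume T: "\<not> T \<subseteq> insert j A"
  then have "g (T - {j}) = 0" "\<And>a. g (insert a T) = 0" using assms(1) by blast+
  then have "wedge j g T = 0" "contract n \<beta> j g T = 0" by (simp_all add: wedge_def contract_def)
  then show False using assms(2) by (simp add: chevalley_def)
qed

lemma ext_expansion:
  assumes "finite A" "\<And>T. g T \<noteq> 0 \<Longrightarrow> T \<subseteq> A"
  shows "g = (\<lambda>X. \<Sum>T\<in>Pow A. g T * ext_monomial T X)"
proof
  fix X
  have "(\<Sum>T\<in>Pow A. g T * ext_monomial T X) = (\<Sum>T\<in>Pow A. if T = X then g T else 0)"
    by (intro sum.cong refl) (auto simp: ext_monomial_def)
  also have "\<dots> = g X" using assms by (auto simp: sum.delta')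
  finally show "g X = (\<Sum>T\<in>Pow A. g T * ext_monomial T X)" by simp
qed

lemma chevalley_expansion:
  assumes "finite A" "\<And>T. g T \<noteq> 0 \<Longrightarrow> T \<subseteq> A"
  shows "chevalley n \<beta> j g T = (\<Sum>S\<in>Pow A. g S * chevalley n \<beta> j (ext_monomial S) T)"
proof -
  have "chevalley n \<beta> j g T = chevalley n \<beta> j (\<lambda>X. \<Sum>S\<in>Pow A. g S * ext_monomial S X) T"
    using ext_expansion[OF assms] by metis
  then show ?thesis by (simp add: chevalley_sum chevalley_scale)
qed

lemma chevalley_monomial_less:
  assumes "j < n" "\<And>s. s \<in> S \<Longrightarrow> j < s" "\<And>k a. k < a \<Longrightarrow> \<beta> k a = 0"
  shows "chevalley n \<beta> j (ext_monomial S) T = ext_monomial (insert j S) T"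
proof -
  have "wedge j (ext_monomial S) T = ext_monomial (insert j S) T"
  proof (cases "T = insert j S")
    case True
    have "j \<notin> S" using assms(2) by blast
    moreover have "wedge_sign j T = 1" using True assms(2) by (intro wedge_sign_eq_1) force
    ultimately show ?thesis using True by (simp add: wedge_def ext_monomial_def)
  next
    case False
    then have "\<not> (j \<in> T \<and> T - {j} = S)" by auto
    then show ?thesis using False by (auto simp: wedge_def ext_monomial_def)
  qed
  moreover have "contract n \<beta> j (ext_monomial S) T = 0"
    unfolding contract_def
  proof (intro sum.neutral ballI)
    fix a
    show "wedge_sign a T * \<beta> j a * ext_monomial S (insert a T) = 0"
      using assms(2)[of a] assms(3)[of j a] by (cases "insert a T = S") (auto simp: ext_monomial_def)
  qed
  ultimately show ?thesis by (simp add: chevalley_def)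
qed

lemma chevalley_monomial_Min:
  assumes "s < n" "s \<in> S" "\<And>t. t \<in> S \<Longrightarrow> s \<le> t" "\<And>k a. k < a \<Longrightarrow> \<beta> k a = 0"
  shows "chevalley n \<beta> s (ext_monomial S) T = \<beta> s s * ext_monomial (S - {s}) T"
proof -
  have "wedge s (ext_monomial S) T = 0"
    using assms(2) by (auto simp: wedge_def ext_monomial_def)
  moreover have "contract n \<beta> s (ext_monomial S) T
      = (\<Sum>a\<in>{..<n} - T. if a = s then \<beta> s s * ext_monomial (S - {s}) T else 0)"
    unfolding contract_def
  proof (rule sum.cong[OF refl])
    fix a assume a: "a \<in> {..<n} - T"
    show "wedge_sign a T * \<beta> s a * ext_monomial S (insert a T) = (if a = s then \<beta> s s * ext_monomial (S - {s}) T else 0)"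
    proof (cases "insert a T = S")
      case True
      then have "a \<in> S" "T = S - {a}" using a by auto
      moreover from this have "wedge_sign s T = 1" if "a = s"
        using that assms(3) by (intro wedge_sign_eq_1) auto
      moreover have "\<beta> s a = 0" if "a \<noteq> s"
        using that assms(3,4) \<open>a \<in> S\<close> by (simp add: le_neq_implies_less)
      ultimately show ?thesis using True by (auto simp: ext_monomial_def)
    next
      case False
      then show ?thesis using a assms(2) by (auto simp: ext_monomial_def)
    qed
  qed
  moreover have "(\<Sum>a\<in>{..<n} - T. if a = s then \<beta> s s * ext_monomial (S - {s}) T else 0)
      = \<beta> s s * ext_monomial (S - {s}) T"
    using assms(1) by (cases "s \<in> T") (auto simp: ext_monomial_def)
  ultimately show ?thesis by (simp add: chevalley_def)
qed

section \<open>Quadratic spaces\<close>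

locale quadratic_space = vector_space scale for scale :: "complex \<Rightarrow> 'v::ab_group_add \<Rightarrow> 'v" +
  fixes f :: "'v \<Rightarrow> complex"
  assumes quadratic: "quadratic_form scale f"
begin

definition polar :: "'v \<Rightarrow> 'v \<Rightarrow> complex" where
  "polar u v = f (u + v) - f u - f v"

lemma f_scale: "f (scale a v) = a^2 * f v"
  using quadratic by (simp add: quadratic_form_def)

lemma f_add: "f (u + v) = f u + f v + polar u v"
  by (simp add: polar_def)

lemma f_zero: "f 0 = 0"
  using f_scale[of 0 0] by simp

lemma polar_commute: "polar u v = polar v u"
  by (simp add: polar_def add.commute)

lemma polar_add_left: "polar (u1 + u2) v = polar u1 v + polar u2 v"
  using quadratic unfolding quadratic_form_def Let_def polar_def by blast

lemma polar_scale_left: "polar (scale a u) v = a * polar u v"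
  using quadratic unfolding quadratic_form_def Let_def polar_def by blast

lemma polar_scale_right: "polar u (scale a v) = a * polar u v"
  using polar_scale_left polar_commute by metis

lemma polar_sum_left: "polar (\<Sum>j\<in>K. x j) v = (\<Sum>j\<in>K. polar (x j) v)"
  by (induction K rule: infinite_finite_induct)
    (simp_all add: polar_add_left polar_scale_left[of 0, simplified])

lemma f_sum_expansion:
  "f (\<Sum>j<(N::nat). scale (c j) (e j)) =
     (\<Sum>j<N. (c j)^2 * f (e j)) + (\<Sum>j<N. \<Sum>k<j. c j * c k * polar (e k) (e j))"
proof (induction N)
  case 0
  then show ?case by (simp add: f_zero)
next
  case (Suc N)
  have "f (\<Sum>j<Suc N. scale (c j) (e j)) = f (\<Sum>j<N. scale (c j) (e j)) + f (scale (c N) (e N))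
      + polar (\<Sum>j<N. scale (c j) (e j)) (scale (c N) (e N))"
    by (simp add: f_add)
  also have "polar (\<Sum>j<N. scale (c j) (e j)) (scale (c N) (e N)) = (\<Sum>k<N. c N * c k * polar (e k) (e N))"
    by (simp add: polar_sum_left polar_scale_left polar_scale_right sum_distrib_left mult_ac)
  finally show ?case using Suc by (simp add: f_scale)
qed

end

section \<open>Words in the free algebra\<close>

lemma fmul_word_left:
  "fmul (word a) q = (\<lambda>u. if take (length a) u = a then q (drop (length a) u) else 0)"
proof
  fix u :: "'a list"
  have iff: "take k u = a \<longleftrightarrow> k = length a \<and> take (length a) u = a" if "k \<le> length u" for k
    using that by (metis length_take min.absorb2)
  show "fmul (word a) q u = (if take (length a) u = a then q (drop (length a) u) else 0)"
  proof (cases "take (length a) u = a")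
    case True
    have "min (length a) (length u) = length a" using arg_cong[OF True, of length] by simp
    then have "length a \<le> length u" by (metis min.absorb_iff1)
    moreover have "fmul (word a) q u = (\<Sum>k\<le>length u. if k = length a then q (drop k u) else 0)"
      unfolding fmul_def word_def by (intro sum.cong refl) (use iff True in auto)
    ultimately show ?thesis using True by simp
  next
    case False
    have "fmul (word a) q u = 0"
      unfolding fmul_def word_def by (intro sum.neutral ballI) (use iff False in auto)
    then show ?thesis using False by auto
  qed
qed

lemma fmul_word_right:
  "fmul p (word b) = (\<lambda>u. if length b \<le> length u \<and> drop (length u - length b) u = b
     then p (take (length u - length b) u) else 0)"
proof
  fix u :: "'a list"
  have iff: "drop k u = b \<longleftrightarrow> k = length u - length b \<and> length b \<le> length u \<and> drop (length u - length b) u = b"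
    if "k \<le> length u" for k
    using that by (metis diff_diff_cancel diff_le_self length_drop)
  show "fmul p (word b) u = (if length b \<le> length u \<and> drop (length u - length b) u = b
      then p (take (length u - length b) u) else 0)"
  proof (cases "length b \<le> length u \<and> drop (length u - length b) u = b")
    case True
    have "fmul p (word b) u = (\<Sum>k\<le>length u. if k = length u - length b then p (take k u) else 0)"
      unfolding fmul_def word_def by (intro sum.cong refl) (use iff True in auto)
    then show ?thesis using True by simp
  next
    case False
    have "fmul p (word b) u = 0"
      unfolding fmul_def word_def by (intro sum.neutral ballI) (use iff False in auto)
    then show ?thesis using False by auto
  qed
qed

lemma fmul_word_word: "fmul (word a) (word b) = word (a @ b)"
proof
  fix u :: "'a list"
  have "take (length a) u = a \<and> drop (length a) u = b \<longleftrightarrow> u = a @ b"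
    by (metis append_eq_conv_conj)
  moreover have "fmul (word a) (word b) u = (if take (length a) u = a then word b (drop (length a) u) else 0)"
    by (simp only: fmul_word_left)
  ultimately show "fmul (word a) (word b) u = word (a @ b) u"
    by (auto simp: word_def)
qed

lemma fmul_word_left_add: "fmul (word a) (\<lambda>w. p w + q w) = (\<lambda>u. fmul (word a) p u + fmul (word a) q u)"
  by (auto simp: fmul_word_left fun_eq_iff)

lemma fmul_word_left_scale: "fmul (word a) (\<lambda>w. c * p w) = (\<lambda>u. c * fmul (word a) p u)"
  by (auto simp: fmul_word_left fun_eq_iff)

lemma fmul_word_left_sum: "fmul (word a) (\<lambda>w. \<Sum>k\<in>K. p k w) = (\<lambda>u. \<Sum>k\<in>K. fmul (word a) (p k) u)"
  by (auto simp: fmul_word_left fun_eq_iff)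

lemma fmul_word_left_diff: "fmul (word a) (\<lambda>w. p w - q w) = (\<lambda>u. fmul (word a) p u - fmul (word a) q u)"
  by (auto simp: fmul_word_left fun_eq_iff)

lemma fmul_word_right_add: "fmul (\<lambda>w. p w + q w) (word a) = (\<lambda>u. fmul p (word a) u + fmul q (word a) u)"
  by (auto simp: fmul_word_right fun_eq_iff)

lemma fmul_word_right_scale: "fmul (\<lambda>w. c * p w) (word a) = (\<lambda>u. c * fmul p (word a) u)"
  by (auto simp: fmul_word_right fun_eq_iff)

lemma fmul_word_right_sum: "fmul (\<lambda>w. \<Sum>k\<in>K. p k w) (word a) = (\<lambda>u. \<Sum>k\<in>K. fmul (p k) (word a) u)"
  by (auto simp: fmul_word_right fun_eq_iff)

lemma fmul_word_right_diff: "fmul (\<lambda>w. p w - q w) (word a) = (\<lambda>u. fmul p (word a) u - fmul q (word a) u)"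
  by (auto simp: fmul_word_right fun_eq_iff)

lemma fmul_word_left_append: "fmul (word a) q (a @ r) = q r"
  by (simp add: fmul_word_left)

lemma fmul_word_right_append: "fmul p (word b) (r @ b) = p r"
  by (simp add: fmul_word_right)

lemma support_fmul_word_left: "{u. fmul (word a) q u \<noteq> 0} \<subseteq> (\<lambda>r. a @ r) ` {r. q r \<noteq> 0}"
proof
  fix u assume "u \<in> {u. fmul (word a) q u \<noteq> 0}"
  then have "take (length a) u = a" "q (drop (length a) u) \<noteq> 0"
    by (auto simp: fmul_word_left split: if_splits)
  then show "u \<in> (\<lambda>r. a @ r) ` {r. q r \<noteq> 0}"
    by (intro image_eqI[of _ _ "drop (length a) u"]) (metis append_take_drop_id, auto)
qed

lemma support_fmul_word_right: "{u. fmul p (word b) u \<noteq> 0} \<subseteq> (\<lambda>r. r @ b) ` {r. p r \<noteq> 0}"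
proof
  fix u assume "u \<in> {u. fmul p (word b) u \<noteq> 0}"
  then have "drop (length u - length b) u = b" "p (take (length u - length b) u) \<noteq> 0"
    by (auto simp: fmul_word_right split: if_splits)
  then show "u \<in> (\<lambda>r. r @ b) ` {r. p r \<noteq> 0}"
    by (intro image_eqI[of _ _ "take (length u - length b) u"]) (metis append_take_drop_id, auto)
qed

lemma fin_supp_word: "fin_supp (word a)"
  unfolding fin_supp_def word_def by simp

lemma fin_supp_scale_word: "fin_supp (\<lambda>w. c * word a w)"
  unfolding fin_supp_def by (rule finite_subset[of _ "{a}"]) (auto simp: word_def)

lemma fin_supp_fmul_word_left: "fin_supp q \<Longrightarrow> fin_supp (fmul (word a) q)"
  unfolding fin_supp_def using support_fmul_word_left finite_subset by blast

lemma fin_supp_fmul_word_right: "fin_supp p \<Longrightarrow> fin_supp (fmul p (word b))"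
  unfolding fin_supp_def using support_fmul_word_right finite_subset by blast

lemma fin_supp_add: "fin_supp p \<Longrightarrow> fin_supp q \<Longrightarrow> fin_supp (\<lambda>w. p w + q w)"
  unfolding fin_supp_def by (rule finite_subset[of _ "{w. p w \<noteq> 0} \<union> {w. q w \<noteq> 0}"]) auto

lemma fin_supp_scale: "fin_supp p \<Longrightarrow> fin_supp (\<lambda>w. c * p w)"
  unfolding fin_supp_def by (rule finite_subset[of _ "{w. p w \<noteq> 0}"]) auto

lemma fin_supp_diff: "fin_supp p \<Longrightarrow> fin_supp q \<Longrightarrow> fin_supp (\<lambda>w. p w - q w)"
  using fin_supp_add[of p "\<lambda>w. (-1) * q w"] fin_supp_scale[of q "-1"] by simp

lemma word_expansion:
  assumes "fin_supp p"
  shows "p = (\<lambda>u. \<Sum>w | p w \<noteq> 0. p w * word w u)"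
proof
  fix u
  have "(\<Sum>w | p w \<noteq> 0. p w * word w u) = (\<Sum>w | p w \<noteq> 0. if w = u then p w else 0)"
    by (intro sum.cong refl) (auto simp: word_def)
  also have "\<dots> = p u" using assms by (simp add: fin_supp_def sum.delta')
  finally show "p u = (\<Sum>w | p w \<noteq> 0. p w * word w u)" by simp
qed

section \<open>Congruence modulo the Clifford ideal\<close>

context quadratic_space
begin

abbreviation ideal where "ideal \<equiv> clifford_ideal scale f"

lemma ideal_fin_supp: "p \<in> ideal \<Longrightarrow> fin_supp p"
proof (induction rule: clifford_ideal.induct)
  case (rel_add u v)
  show ?case unfolding fin_supp_def
    by (rule finite_subset[of _ "{[u + v], [u], [v]}"]) (auto simp: fsub_def word_def)
next
  case (rel_smult c v)
  show ?case unfolding fin_supp_def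
    by (rule finite_subset[of _ "{[scale c v], [v]}"]) (auto simp: fsub_def fsmult_def word_def)
next
  case (rel_sq v)
  show ?case unfolding fin_supp_def
    by (rule finite_subset[of _ "{[v, v], []}"]) (auto simp: fsub_def fsmult_def word_def)
next
  case zero
  then show ?case by (simp add: fin_supp_def)
qed (simp_all add: fadd_def fsmult_def fin_supp_add fin_supp_scale
      fin_supp_fmul_word_left fin_supp_fmul_word_right)

lemma ideal_add: "p \<in> ideal \<Longrightarrow> q \<in> ideal \<Longrightarrow> (\<lambda>w. p w + q w) \<in> ideal"
  using clifford_ideal.add[of p scale f q] by (simp add: fadd_def)

lemma ideal_scale: "p \<in> ideal \<Longrightarrow> (\<lambda>w. c * p w) \<in> ideal"
  using clifford_ideal.smult[of p scale f c] by (simp add: fsmult_def)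

lemma ideal_diff: "p \<in> ideal \<Longrightarrow> q \<in> ideal \<Longrightarrow> (\<lambda>w. p w - q w) \<in> ideal"
  using ideal_add[of p "\<lambda>w. (-1) * q w"] ideal_scale[of q "-1"] by simp

lemma ideal_sum: "(\<And>k. k \<in> K \<Longrightarrow> F k \<in> ideal) \<Longrightarrow> (\<lambda>w. \<Sum>k\<in>K. F k w) \<in> ideal"
proof (induction K rule: infinite_finite_induct)
  case (insert x K)
  then show ?case using ideal_add[of "F x"] by simp
qed (simp_all add: clifford_ideal.zero)

definition cl_eq :: "('v list \<Rightarrow> complex) \<Rightarrow> ('v list \<Rightarrow> complex) \<Rightarrow> bool" where
  "cl_eq p q \<longleftrightarrow> (\<lambda>w. p w - q w) \<in> ideal"

lemma cl_eq_refl: "cl_eq p p"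
  by (simp add: cl_eq_def clifford_ideal.zero)

lemma cl_eq_sym: "cl_eq p q \<Longrightarrow> cl_eq q p"
  unfolding cl_eq_def using ideal_scale[where p="\<lambda>w. p w - q w" and c="-1"] by simp

lemma cl_eq_trans [trans]: "cl_eq p q \<Longrightarrow> cl_eq q r \<Longrightarrow> cl_eq p r"
  unfolding cl_eq_def using ideal_add[where p="\<lambda>w. p w - q w" and q="\<lambda>w. q w - r w"] by simp

lemma cl_eq_add: "cl_eq p p' \<Longrightarrow> cl_eq q q' \<Longrightarrow> cl_eq (\<lambda>w. p w + q w) (\<lambda>w. p' w + q' w)"
  unfolding cl_eq_def using ideal_add[where p="\<lambda>w. p w - p' w" and q="\<lambda>w. q w - q' w"]
  by (simp add: algebra_simps)

lemma cl_eq_diff: "cl_eq p p' \<Longrightarrow> cl_eq q q' \<Longrightarrow> cl_eq (\<lambda>w. p w - q w) (\<lambda>w. p' w - q' w)"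
  unfolding cl_eq_def using ideal_diff[where p="\<lambda>w. p w - p' w" and q="\<lambda>w. q w - q' w"]
  by (simp add: algebra_simps)

lemma cl_eq_scale: "cl_eq p q \<Longrightarrow> cl_eq (\<lambda>w. c * p w) (\<lambda>w. c * q w)"
  unfolding cl_eq_def using ideal_scale[where p="\<lambda>w. p w - q w" and c=c]
  by (simp add: algebra_simps)

lemma cl_eq_sum: "(\<And>k. k \<in> K \<Longrightarrow> cl_eq (F k) (G k)) \<Longrightarrow> cl_eq (\<lambda>w. \<Sum>k\<in>K. F k w) (\<lambda>w. \<Sum>k\<in>K. G k w)"
  unfolding cl_eq_def using ideal_sum[where K=K and F="\<lambda>k w. F k w - G k w"]
  by (simp add: sum_subtractf)

lemma cl_eq_fmul_word_left: "cl_eq p q \<Longrightarrow> cl_eq (fmul (word a) p) (fmul (word a) q)"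
  unfolding cl_eq_def using clifford_ideal.lmult[where p="\<lambda>w. p w - q w" and w=a and scale=scale and f=f]
  by (simp add: fmul_word_left_diff)

lemma cl_eq_fmul_word_right: "cl_eq p q \<Longrightarrow> cl_eq (fmul p (word a)) (fmul q (word a))"
  unfolding cl_eq_def using clifford_ideal.rmult[where p="\<lambda>w. p w - q w" and w=a and scale=scale and f=f]
  by (simp add: fmul_word_right_diff)

lemma cl_eq_word_add: "cl_eq (word [u + v]) (\<lambda>w. word [u] w + word [v] w)"
  using clifford_ideal.rel_add[where u=u and v=v and scale=scale and f=f] by (simp add: cl_eq_def fsub_def algebra_simps)

lemma cl_eq_word_scale: "cl_eq (word [scale c v]) (\<lambda>w. c * word [v] w)"
  using clifford_ideal.rel_smult[where c=c and v=v and scale=scale and f=f] by (simp add: cl_eq_def fsub_def fsmult_def)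

lemma cl_eq_word_square: "cl_eq (word [v, v]) (\<lambda>w. f v * word [] w)"
  using clifford_ideal.rel_sq[where v=v and scale=scale and f=f] by (simp add: cl_eq_def fsub_def fsmult_def)

lemma cl_eq_word_zero: "cl_eq (word [0]) (\<lambda>w. 0)"
  using cl_eq_word_scale[of 0 0] by (simp add: cl_eq_def)

lemma cl_eq_word_sum: "cl_eq (word [\<Sum>j\<in>K. scale (c j) (x j)]) (\<lambda>w. \<Sum>j\<in>K. c j * word [x j] w)"
proof (induction K rule: infinite_finite_induct)
  case (insert a K)
  then show ?case
    using cl_eq_trans[OF cl_eq_word_add cl_eq_add[OF cl_eq_word_scale insert.IH]] by simp
qed (simp_all add: cl_eq_word_zero)

lemma cl_eq_word_anticomm: "cl_eq (\<lambda>w. word [x, y] w + word [y, x] w) (\<lambda>w. polar x y * word [] w)"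
proof -
  have "cl_eq (word [x + y, x + y]) (\<lambda>w. word [x, x + y] w + word [y, x + y] w)" (is "cl_eq ?sq ?mid")
    using cl_eq_fmul_word_right[OF cl_eq_word_add, of x y "[x + y]"]
    by (simp add: fmul_word_right_add fmul_word_word)
  also have "cl_eq ?mid (\<lambda>w. (word [x, x] w + word [x, y] w) + (word [y, x] w + word [y, y] w))"
    using cl_eq_add[OF cl_eq_fmul_word_left[OF cl_eq_word_add, of "[x]" x y]
        cl_eq_fmul_word_left[OF cl_eq_word_add, of "[y]" x y]]
    by (simp add: fmul_word_left_add fmul_word_word)
  finally have "cl_eq (\<lambda>w. (word [x, x] w + word [x, y] w) + (word [y, x] w + word [y, y] w))
      (\<lambda>w. f (x + y) * word [] w)"
    by (rule cl_eq_trans[OF cl_eq_sym cl_eq_word_square])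
  from cl_eq_diff[OF this cl_eq_add[OF cl_eq_word_square[of x] cl_eq_word_square[of y]]]
  show ?thesis by (simp add: polar_def algebra_simps)
qed

lemma cl_eq_word_Cons_sum:
  "cl_eq (word ((\<Sum>j\<in>K. scale (c j) (x j)) # l)) (\<lambda>w. \<Sum>j\<in>K. c j * word (x j # l) w)"
  using cl_eq_fmul_word_right[OF cl_eq_word_sum[where K=K and c=c and x=x], of l]
  by (simp add: fmul_word_right_sum fmul_word_right_scale fmul_word_word)

lemma cl_eq_word_Cons_square: "cl_eq (word (x # x # l)) (\<lambda>w. f x * word l w)"
  using cl_eq_fmul_word_right[OF cl_eq_word_square, of x l]
  by (simp add: fmul_word_right_scale fmul_word_word)

lemma cl_eq_word_Cons_swap: "cl_eq (word (x # y # l)) (\<lambda>w. polar x y * word l w - word (y # x # l) w)"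
proof -
  have "cl_eq (\<lambda>w. word (x # y # l) w + word (y # x # l) w) (\<lambda>w. polar x y * word l w)"
    using cl_eq_fmul_word_right[OF cl_eq_word_anticomm, of x y l]
    by (simp add: fmul_word_right_add fmul_word_right_scale fmul_word_word)
  from cl_eq_diff[OF this cl_eq_refl[of "word (y # x # l)"]] show ?thesis by simp
qed

end

section \<open>A Clifford module for a finite independent list\<close>

context quadratic_space
begin

text \<open>A lower triangular form on span es whose symmetrisation is polar and whose diagonal is f,
  so that the Chevalley operators of the vectors in span es square to f.\<close>

definition polar_tri :: "'v list \<Rightarrow> nat \<Rightarrow> nat \<Rightarrow> complex" where
  "polar_tri es k a = (if a = k then f (es!k) else if a < k then polar (es!a) (es!k) else 0)"

definition coord :: "'v list \<Rightarrow> 'v \<Rightarrow> nat \<Rightarrow> complex" where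
  "coord es v j = representation (set es) v (es!j)"

definition clifford_action :: "'v list \<Rightarrow> 'v \<Rightarrow> ext \<Rightarrow> ext" where
  "clifford_action es v g =
     (\<lambda>T. \<Sum>j<length es. coord es v j * chevalley (length es) (polar_tri es) j g T)"

definition word_action :: "'v list \<Rightarrow> 'v list \<Rightarrow> ext \<Rightarrow> ext" where
  "word_action es ws g = foldr (clifford_action es) ws g"

definition free_action :: "'v list \<Rightarrow> ('v list \<Rightarrow> complex) \<Rightarrow> ext \<Rightarrow> ext" where
  "free_action es p g = (\<lambda>T. \<Sum>w | p w \<noteq> 0. p w * word_action es w g T)"

lemma polar_tri_eq_0: "k < a \<Longrightarrow> polar_tri es k a = 0"
  by (simp add: polar_tri_def)

lemma clifford_action_scale: "clifford_action es v (\<lambda>T. c * g T) T = c * clifford_action es v g T"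
  by (simp add: clifford_action_def chevalley_scale sum_distrib_left algebra_simps)

lemma clifford_action_sum:
  "clifford_action es v (\<lambda>T. \<Sum>k\<in>K. h k T) T = (\<Sum>k\<in>K. clifford_action es v (h k) T)"
  by (simp add: clifford_action_def chevalley_sum sum_distrib_left sum.swap[of _ K])

lemma coord_expansion:
  assumes "independent (set es)" "distinct es" "v \<in> span (set es)"
  shows "v = (\<Sum>j<length es. scale (coord es v j) (es!j))"
proof -
  have "v = (\<Sum>b\<in>set es. scale (representation (set es) v b) b)"
    using sum_representation_eq[OF assms(1,3)] by simp
  also have "\<dots> = (\<Sum>j<length es. scale (coord es v j) (es!j))"
    unfolding coord_def nth_image[of "length es" es, simplified, symmetric]
    by (subst sum.reindex) (auto intro: inj_on_nth assms(2) simp: atLeast0LessThan)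
  finally show ?thesis .
qed

lemma sum_lessThan_square_split:
  "(\<Sum>j<(N::nat). \<Sum>k<N. a j k) = (\<Sum>j<N. a j j) + (\<Sum>j<N. \<Sum>k<j. a j k + a k j :: complex)"
  by (induction N) (simp_all add: sum.distrib algebra_simps)

lemma clifford_action_square:
  assumes "independent (set es)" "distinct es" "v \<in> span (set es)"
  shows "clifford_action es v (clifford_action es v g) T = f v * g T"
proof -
  let ?n = "length es" and ?c = "coord es v"
  let ?A = "\<lambda>j k. ?c j * ?c k * chevalley ?n (polar_tri es) j (chevalley ?n (polar_tri es) k g) T"
  have diag: "?A j j = (?c j)^2 * f (es!j) * g T" if "j < ?n" for j
    using chevalley_anticomm[OF that that, of "polar_tri es" g T]
    by (simp add: polar_tri_def power2_eq_square field_simps)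
  have off_diag: "?A j k + ?A k j = ?c j * ?c k * polar (es!k) (es!j) * g T" if "k < j" "j < ?n" for j k
    using chevalley_anticomm[of j ?n k "polar_tri es" g T] that
    by (simp add: polar_tri_def algebra_simps flip: distrib_left)
  have "clifford_action es v (clifford_action es v g) T = (\<Sum>j<?n. \<Sum>k<?n. ?A j k)"
    unfolding clifford_action_def by (simp add: chevalley_sum chevalley_scale sum_distrib_left mult_ac)
  also have "\<dots> = (\<Sum>j<?n. ?A j j) + (\<Sum>j<?n. \<Sum>k<j. ?A j k + ?A k j)"
    by (rule sum_lessThan_square_split)
  also have "\<dots> = ((\<Sum>j<?n. (?c j)^2 * f (es!j)) + (\<Sum>j<?n. \<Sum>k<j. ?c j * ?c k * polar (es!k) (es!j))) * g T"
    by (simp add: diag off_diag sum_distrib_right distrib_right)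
  also have "\<dots> = f v * g T"
    using coord_expansion[OF assms] f_sum_expansion[of ?c "\<lambda>j. es!j" ?n] by simp
  finally show ?thesis .
qed

lemma coord_add:
  "independent (set es) \<Longrightarrow> u \<in> span (set es) \<Longrightarrow> v \<in> span (set es) \<Longrightarrow>
    coord es (u + v) j = coord es u j + coord es v j"
  by (simp add: coord_def representation_add)

lemma coord_scale:
  "independent (set es) \<Longrightarrow> v \<in> span (set es) \<Longrightarrow> coord es (scale c v) j = c * coord es v j"
  by (simp add: coord_def representation_scale)

lemma clifford_action_add_vector:
  "independent (set es) \<Longrightarrow> u \<in> span (set es) \<Longrightarrow> v \<in> span (set es) \<Longrightarrow>
    clifford_action es (u + v) g T = clifford_action es u g T + clifford_action es v g T"
  by (simp add: clifford_action_def coord_add sum.distrib algebra_simps)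

lemma clifford_action_scale_vector:
  "independent (set es) \<Longrightarrow> v \<in> span (set es) \<Longrightarrow>
    clifford_action es (scale c v) g T = c * clifford_action es v g T"
  by (simp add: clifford_action_def coord_scale sum_distrib_left algebra_simps)

lemma word_action_Nil [simp]: "word_action es [] g = g"
  by (simp add: word_action_def)

lemma word_action_Cons [simp]: "word_action es (v # ws) g = clifford_action es v (word_action es ws g)"
  by (simp add: word_action_def)

lemma word_action_append: "word_action es (a @ b) g = word_action es a (word_action es b g)"
  by (simp add: word_action_def)

lemma word_action_scale: "word_action es ws (\<lambda>T. c * g T) = (\<lambda>T. c * word_action es ws g T)"
  by (induction ws) (simp_all add: clifford_action_scale)

lemma word_action_sum: "word_action es ws (\<lambda>T. \<Sum>k\<in>K. h k T) = (\<lambda>T. \<Sum>k\<in>K. word_action es ws (h k) T)"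
  by (induction ws) (simp_all add: clifford_action_sum)

lemma word_action_zero: "word_action es ws (\<lambda>T. 0) = (\<lambda>T. 0)"
  using word_action_sum[of es ws "\<lambda>_ _. 0" "{}"] by simp

lemma free_action_superset:
  "finite A \<Longrightarrow> {w. p w \<noteq> 0} \<subseteq> A \<Longrightarrow> free_action es p g T = (\<Sum>w\<in>A. p w * word_action es w g T)"
  unfolding free_action_def by (rule sum.mono_neutral_left) auto

lemma free_action_add:
  assumes "fin_supp p" "fin_supp q"
  shows "free_action es (\<lambda>w. p w + q w) g T = free_action es p g T + free_action es q g T"
proof -
  let ?A = "{w. p w \<noteq> 0} \<union> {w. q w \<noteq> 0}"
  have A: "finite ?A" using assms by (simp add: fin_supp_def)
  have "free_action es (\<lambda>w. p w + q w) g T = (\<Sum>w\<in>?A. (p w + q w) * word_action es w g T)"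
    by (rule free_action_superset[OF A]) auto
  also have "\<dots> = (\<Sum>w\<in>?A. p w * word_action es w g T) + (\<Sum>w\<in>?A. q w * word_action es w g T)"
    by (simp add: distrib_right sum.distrib)
  also have "\<dots> = free_action es p g T + free_action es q g T"
    using free_action_superset[OF A, of p] free_action_superset[OF A, of q] by auto
  finally show ?thesis .
qed

lemma free_action_scale:
  assumes "fin_supp p"
  shows "free_action es (\<lambda>w. c * p w) g T = c * free_action es p g T"
  using assms free_action_superset[of "{w. p w \<noteq> 0}" "\<lambda>w. c * p w"]
  by (auto simp: fin_supp_def free_action_def sum_distrib_left mult_ac)

lemma free_action_diff:
  assumes "fin_supp p" "fin_supp q"
  shows "free_action es (\<lambda>w. p w - q w) g T = free_action es p g T - free_action es q g T"
  using free_action_add[OF assms(1) fin_supp_scale[OF assms(2), of "-1"]] free_action_scale[OF assms(2), where c="-1"]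
  by simp

lemma free_action_word: "free_action es (word a) g T = word_action es a g T"
  using free_action_superset[of "{a}" "word a"] by (auto simp: word_def)

lemma free_action_fmul_word_left:
  assumes "fin_supp p"
  shows "free_action es (fmul (word a) p) g T = word_action es a (free_action es p g) T"
proof -
  let ?S = "{r. p r \<noteq> 0}"
  have "finite ?S" using assms by (simp add: fin_supp_def)
  then have "free_action es (fmul (word a) p) g T = (\<Sum>u\<in>(\<lambda>r. a @ r) ` ?S. fmul (word a) p u * word_action es u g T)"
    by (intro free_action_superset support_fmul_word_left) auto
  also have "\<dots> = (\<Sum>r\<in>?S. p r * word_action es a (word_action es r g) T)"
    by (subst sum.reindex) (auto simp: inj_on_def fmul_word_left_append word_action_append)
  also have "\<dots> = word_action es a (free_action es p g) T"
    unfolding free_action_def word_action_sum word_action_scale by simp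
  finally show ?thesis .
qed

lemma free_action_fmul_word_right:
  assumes "fin_supp p"
  shows "free_action es (fmul p (word b)) g T = free_action es p (word_action es b g) T"
proof -
  let ?S = "{r. p r \<noteq> 0}"
  have "finite ?S" using assms by (simp add: fin_supp_def)
  then have "free_action es (fmul p (word b)) g T = (\<Sum>u\<in>(\<lambda>r. r @ b) ` ?S. fmul p (word b) u * word_action es u g T)"
    by (intro free_action_superset support_fmul_word_right) auto
  also have "\<dots> = (\<Sum>r\<in>?S. p r * word_action es r (word_action es b g) T)"
    by (subst sum.reindex) (auto simp: inj_on_def fmul_word_right_append word_action_append)
  finally show ?thesis by (simp add: free_action_def)
qed

text \<open>The relations only hold for vectors in span es, so every element of the ideal comes with
  a finite set X of vectors (those occurring in the relations used to generate it).\<close>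

lemma free_action_ideal:
  assumes "p \<in> ideal"
  shows "\<exists>X. finite X \<and> (\<forall>es. independent (set es) \<and> distinct es \<and> X \<subseteq> span (set es)
    \<longrightarrow> free_action es p = (\<lambda>g T. 0))"
  using assms
proof (induction rule: clifford_ideal.induct)
  case (rel_add u v)
  show ?case
    by (intro exI[of _ "{u, v}"])
      (auto simp: fun_eq_iff fsub_def free_action_diff fin_supp_diff fin_supp_word free_action_word
        clifford_action_add_vector)
next
  case (rel_smult c v)
  show ?case
    by (intro exI[of _ "{v}"])
      (auto simp: fun_eq_iff fsub_def fsmult_def free_action_diff fin_supp_scale_word fin_supp_word
        free_action_word free_action_scale clifford_action_scale_vector)
next
  case (rel_sq v)
  show ?case
    by (intro exI[of _ "{v}"])
      (auto simp: fun_eq_iff fsub_def fsmult_def free_action_diff fin_supp_scale_word fin_supp_word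
        free_action_word free_action_scale clifford_action_square)
next
  case zero
  then show ?case by (auto simp: free_action_def)
next
  case (add p q)
  then obtain X Y where "finite X" "finite Y"
    "\<forall>es. independent (set es) \<and> distinct es \<and> X \<subseteq> span (set es) \<longrightarrow> free_action es p = (\<lambda>g T. 0)"
    "\<forall>es. independent (set es) \<and> distinct es \<and> Y \<subseteq> span (set es) \<longrightarrow> free_action es q = (\<lambda>g T. 0)"
    by blast
  then show ?case
    using ideal_fin_supp[OF add.hyps(1)] ideal_fin_supp[OF add.hyps(2)]
    by (intro exI[of _ "X \<union> Y"]) (auto simp: fadd_def free_action_add fun_eq_iff)
next
  case (smult p c)
  then show ?case
    using ideal_fin_supp[OF smult.hyps] by (auto simp: fsmult_def free_action_scale fun_eq_iff)
next
  case (lmult p a)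
  then show ?case
    using ideal_fin_supp[OF lmult.hyps] by (auto simp: free_action_fmul_word_left word_action_zero)
next
  case (rmult p b)
  then show ?case
    using ideal_fin_supp[OF rmult.hyps] by (auto simp: free_action_fmul_word_right fun_eq_iff)
qed

end

section \<open>Ordered words\<close>

lemma sorted_list_of_set_insert_less:
  assumes "finite T" "\<And>t. t \<in> T \<Longrightarrow> s < t"
  shows "sorted_list_of_set (insert s T) = s # sorted_list_of_set T"
proof -
  have "Min (insert s T) = s" by (rule Min_eqI) (use assms in \<open>auto intro: less_imp_le\<close>)
  moreover have "insert s T - {s} = T" using assms(2) by auto
  ultimately show ?thesis using sorted_list_of_set_nonempty[of "insert s T"] assms(1) by simp
qed

locale quadratic_space_basis = quadratic_space scale f
  for scale :: "complex \<Rightarrow> 'v::ab_group_add \<Rightarrow> 'v" and f +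
  fixes es :: "'v list"
  assumes independent_es: "independent (set es)" and distinct_es: "distinct es"
begin

abbreviation cliff :: "nat \<Rightarrow> ext \<Rightarrow> ext" where
  "cliff j \<equiv> chevalley (length es) (polar_tri es) j"

definition indices :: "'v set \<Rightarrow> nat set" where
  "indices B = {j. j < length es \<and> es!j \<in> B}"

lemma indices_set: "indices (set es) = {..<length es}"
  by (auto simp: indices_def)

lemma coord_eq_0:
  assumes "B \<subseteq> set es" "v \<in> span B" "es!j \<notin> B"
  shows "coord es v j = 0"
  using representation_extend[OF independent_es assms(2,1)] representation_ne_zero[of B v "es!j"] assms(3)
  by (auto simp: coord_def)

lemma clifford_action_support:
  assumes "B \<subseteq> set es" "v \<in> span B" "\<And>T. g T \<noteq> 0 \<Longrightarrow> T \<subseteq> indices B"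
    and "clifford_action es v g T \<noteq> 0"
  shows "T \<subseteq> indices B"
proof -
  obtain j where j: "j < length es" "coord es v j * cliff j g T \<noteq> 0"
    using assms(4) unfolding clifford_action_def by (meson lessThan_iff sum.not_neutral_contains_not_neutral)
  then have "j \<in> indices B" using coord_eq_0[OF assms(1,2)] by (fastforce simp: indices_def)
  moreover have "T \<subseteq> insert j (indices B)"
    using chevalley_support[of g "indices B" "length es" "polar_tri es" j T] assms(3) j(2) by auto
  ultimately show ?thesis by auto
qed

lemma word_action_support:
  assumes "B \<subseteq> set es" "set ws \<subseteq> span B" "\<And>T. g T \<noteq> 0 \<Longrightarrow> T \<subseteq> indices B"
  shows "word_action es ws g T \<noteq> 0 \<Longrightarrow> T \<subseteq> indices B"
  using assms(2)
proof (induction ws arbitrary: T)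
  case Nil
  then show ?case using assms(3) by simp
next
  case (Cons v ws)
  then show ?case using clifford_action_support[OF assms(1), of v "word_action es ws g" T] by auto
qed

lemma free_action_support:
  assumes "B \<subseteq> set es" "\<And>w. p w \<noteq> 0 \<Longrightarrow> set w \<subseteq> span B"
    and "free_action es p (ext_monomial {}) T \<noteq> 0"
  shows "T \<subseteq> indices B"
proof -
  obtain w where w: "p w \<noteq> 0" "p w * word_action es w (ext_monomial {}) T \<noteq> 0"
    using assms(3) unfolding free_action_def by (auto elim: sum.not_neutral_contains_not_neutral)
  have "ext_monomial {} T' \<noteq> 0 \<Longrightarrow> T' \<subseteq> indices B" for T'
    by (simp add: ext_monomial_def split: if_splits)
  from word_action_support[OF assms(1) assms(2)[OF w(1)] this] w(2) show ?thesis by simp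
qed

definition ordered_word :: "nat set \<Rightarrow> 'v list" where
  "ordered_word S = map ((!) es) (sorted_list_of_set S)"

definition ordered_lift :: "ext \<Rightarrow> 'v list \<Rightarrow> complex" where
  "ordered_lift g = (\<lambda>w. \<Sum>S\<in>Pow {..<length es}. g S * word (ordered_word S) w)"

lemma ordered_word_insert:
  "finite T \<Longrightarrow> (\<And>t. t \<in> T \<Longrightarrow> s < t) \<Longrightarrow> ordered_word (insert s T) = es!s # ordered_word T"
  unfolding ordered_word_def by (subst sorted_list_of_set_insert_less) auto

lemma ordered_lift_monomial:
  assumes "S \<subseteq> {..<length es}"
  shows "ordered_lift (ext_monomial S) = word (ordered_word S)"
proof
  fix w
  have "ordered_lift (ext_monomial S) w = (\<Sum>S'\<in>Pow {..<length es}. if S' = S then word (ordered_word S') w else 0)"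
    unfolding ordered_lift_def by (intro sum.cong refl) (simp add: ext_monomial_def)
  also have "\<dots> = word (ordered_word S) w" using assms by simp
  finally show "ordered_lift (ext_monomial S) w = word (ordered_word S) w" .
qed

lemma ordered_lift_empty: "ordered_lift (ext_monomial {}) = word []"
  using ordered_lift_monomial[of "{}"] by (simp add: ordered_word_def)

lemma ordered_lift_sum: "ordered_lift (\<lambda>T. \<Sum>k\<in>K. g k T) = (\<lambda>w. \<Sum>k\<in>K. ordered_lift (g k) w)"
  by (simp add: fun_eq_iff ordered_lift_def sum_distrib_right sum.swap[of _ K])

lemma ordered_lift_scale: "ordered_lift (\<lambda>T. c * g T) = (\<lambda>w. c * ordered_lift g w)"
  by (simp add: fun_eq_iff ordered_lift_def sum_distrib_left mult_ac)

lemma ordered_lift_diff: "ordered_lift (\<lambda>T. g T - h T) = (\<lambda>w. ordered_lift g w - ordered_lift h w)"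
  by (simp add: fun_eq_iff ordered_lift_def left_diff_distrib sum_subtractf)

lemma cliff_monomial_less:
  assumes "j < length es" "\<And>s. s \<in> S \<Longrightarrow> j < s"
  shows "cliff j (ext_monomial S) = ext_monomial (insert j S)"
  using assms by (intro ext chevalley_monomial_less polar_tri_eq_0)

lemma cliff_monomial_Min:
  assumes "s < length es" "s \<in> S" "\<And>t. t \<in> S \<Longrightarrow> s \<le> t"
  shows "cliff s (ext_monomial S) = (\<lambda>T. f (es!s) * ext_monomial (S - {s}) T)"
proof
  fix T
  have "cliff s (ext_monomial S) T = polar_tri es s s * ext_monomial (S - {s}) T"
    using assms by (intro chevalley_monomial_Min polar_tri_eq_0)
  then show "cliff s (ext_monomial S) T = f (es!s) * ext_monomial (S - {s}) T"
    by (simp add: polar_tri_def)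
qed

lemma ordered_lift_cliff_less:
  assumes s: "s < length es" and h: "\<And>T. h T \<noteq> 0 \<Longrightarrow> T \<subseteq> {..<length es} \<and> (\<forall>t\<in>T. s < t)"
  shows "ordered_lift (cliff s h) = fmul (word [es!s]) (ordered_lift h)"
proof
  fix w
  let ?P = "Pow {..<length es}"
  have h_sub: "\<And>T. h T \<noteq> 0 \<Longrightarrow> T \<subseteq> {..<length es}" using h by blast
  have insert_s: "h T * cliff s (ext_monomial T) S = h T * ext_monomial (insert s T) S" for T S
  proof (cases "h T = 0")
    case False
    then show ?thesis using cliff_monomial_less[OF s, of T] h[OF False] by simp
  qed simp
  have "ordered_lift (cliff s h) w = (\<Sum>S\<in>?P. (\<Sum>T\<in>?P. h T * ext_monomial (insert s T) S) * word (ordered_word S) w)"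
    unfolding ordered_lift_def
    by (intro sum.cong refl) (simp add: chevalley_expansion[OF finite_lessThan h_sub] insert_s)
  also have "\<dots> = (\<Sum>S\<in>?P. \<Sum>T\<in>?P. h T * (ext_monomial (insert s T) S * word (ordered_word S) w))"
    unfolding sum_distrib_right by (simp only: mult.assoc)
  also have "\<dots> = (\<Sum>T\<in>?P. \<Sum>S\<in>?P. h T * (ext_monomial (insert s T) S * word (ordered_word S) w))"
    by (rule sum.swap)
  also have "\<dots> = (\<Sum>T\<in>?P. h T * (\<Sum>S\<in>?P. ext_monomial (insert s T) S * word (ordered_word S) w))"
    by (simp only: sum_distrib_left)
  also have "\<dots> = (\<Sum>T\<in>?P. h T * word (es!s # ordered_word T) w)"
  proof (intro sum.cong refl)
    fix T assume T: "T \<in> ?P"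
    show "h T * (\<Sum>S\<in>?P. ext_monomial (insert s T) S * word (ordered_word S) w) = h T * word (es!s # ordered_word T) w"
    proof (cases "h T = 0")
      case False
      have sub: "insert s T \<subseteq> {..<length es}" and fin: "finite T" and less: "\<And>t. t \<in> T \<Longrightarrow> s < t"
        using T s h[OF False] by (auto intro: finite_subset)
      show ?thesis
        using fun_cong[OF ordered_lift_monomial[OF sub], of w] ordered_word_insert[OF fin less]
        by (simp add: ordered_lift_def)
    qed simp
  qed
  also have "\<dots> = fmul (word [es!s]) (ordered_lift h) w"
    by (simp add: ordered_lift_def fmul_word_left_sum fmul_word_left_scale fmul_word_word)
  finally show "ordered_lift (cliff s h) w = fmul (word [es!s]) (ordered_lift h) w" .
qed

lemma ordered_lift_cliff_insert_less:
  assumes "s < j" "j < length es" "\<And>t. t \<in> S \<Longrightarrow> s < t" "S \<subseteq> {..<length es}"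
  shows "ordered_lift (cliff j (ext_monomial (insert s S))) = (\<lambda>w. polar (es!s) (es!j) * word (ordered_word S) w
    - fmul (word [es!s]) (ordered_lift (cliff j (ext_monomial S))) w)"
proof -
  define h where "h = cliff j (ext_monomial S)"
  have s: "s < length es" using assms(1,2) by simp
  have h_support: "T \<subseteq> {..<length es} \<and> (\<forall>t\<in>T. s < t)" if "h T \<noteq> 0" for T
  proof -
    have "\<And>T. ext_monomial S T \<noteq> 0 \<Longrightarrow> T \<subseteq> S" by (simp add: ext_monomial_def split: if_splits)
    then have "T \<subseteq> insert j S"
      using chevalley_support[of "ext_monomial S" S] that unfolding h_def by blast
    then show ?thesis using assms by auto
  qed
  have monomial: "ext_monomial (insert s S) = cliff s (ext_monomial S)"
    using cliff_monomial_less[OF s assms(3)] by simp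
  have "cliff j (ext_monomial (insert s S)) = (\<lambda>T. polar (es!s) (es!j) * ext_monomial S T - cliff s h T)"
  proof
    fix T
    have "polar_tri es s j + polar_tri es j s = polar (es!s) (es!j)" using assms(1) by (simp add: polar_tri_def)
    then show "cliff j (ext_monomial (insert s S)) T = polar (es!s) (es!j) * ext_monomial S T - cliff s h T"
      using chevalley_anticomm[OF assms(2) s, of "polar_tri es" "ext_monomial S" T]
      unfolding monomial h_def by (simp add: eq_diff_eq)
  qed
  then show ?thesis
    using ordered_lift_cliff_less[OF s h_support] ordered_lift_monomial[OF assms(4)]
    by (simp add: ordered_lift_diff ordered_lift_scale h_def)
qed

text \<open>Reordering e_j e_S by the Clifford relations mirrors the action of the Chevalley operator
  on e_S: induction on |S|, moving e_j past the least element of S.\<close>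

lemma cl_eq_word_Cons_ordered:
  assumes "j < length es" "S \<subseteq> {..<length es}"
  shows "cl_eq (word (es!j # ordered_word S)) (ordered_lift (cliff j (ext_monomial S)))"
  using assms
proof (induction "card S" arbitrary: S rule: less_induct)
  case less
  have fin: "finite S" using less.prems(2) finite_subset by auto
  show ?case
  proof (cases "S = {}")
    case True
    then show ?thesis
      using cliff_monomial_less[OF less.prems(1), of S] ordered_lift_monomial[of "{j}"] less.prems(1)
      by (simp add: ordered_word_def cl_eq_refl)
  next
    case False
    define s where "s = Min S"
    define S' where "S' = S - {s}"
    have s: "s \<in> S" "\<And>t. t \<in> S \<Longrightarrow> s \<le> t" using False fin by (simp_all add: s_def)
    have S': "S = insert s S'" "finite S'" "\<And>t. t \<in> S' \<Longrightarrow> s < t" "S' \<subseteq> {..<length es}"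
      using s fin less.prems(2) by (auto simp: S'_def less_le)
    have ordered_S: "ordered_word S = es!s # ordered_word S'"
      using ordered_word_insert[OF S'(2,3)] S'(1) by simp
    have s_less: "s < length es" using s(1) less.prems(2) by auto
    consider "j < s" | "j = s" | "s < j" by linarith
    then show ?thesis
    proof cases
      case 1
      then have less_S: "\<And>t. t \<in> S \<Longrightarrow> j < t" using s(2) order_less_le_trans by blast
      have "insert j S \<subseteq> {..<length es}" using less.prems by auto
      then show ?thesis
        using cliff_monomial_less[OF less.prems(1) less_S] ordered_word_insert[OF fin less_S]
          ordered_lift_monomial cl_eq_refl
        by simp
    next
      case 2
      then show ?thesis
        using cliff_monomial_Min[OF s_less s] cl_eq_word_Cons_square ordered_S ordered_lift_monomial[OF S'(4)]
        by (simp add: ordered_lift_scale S'_def)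
    next
      case 3
      have "card S' < card S" using fin s(1) unfolding S'_def by (rule card_Diff1_less)
      then have "cl_eq (word (es!j # ordered_word S')) (ordered_lift (cliff j (ext_monomial S')))"
        using less.hyps less.prems(1) S'(4) by blast
      from cl_eq_fmul_word_left[OF this, of "[es!s]"]
      have "cl_eq (word (es!s # es!j # ordered_word S')) (fmul (word [es!s]) (ordered_lift (cliff j (ext_monomial S'))))"
        by (simp add: fmul_word_word)
      then have "cl_eq (word (es!j # es!s # ordered_word S')) (\<lambda>w. polar (es!j) (es!s) * word (ordered_word S') w
          - fmul (word [es!s]) (ordered_lift (cliff j (ext_monomial S'))) w)"
        by (rule cl_eq_trans[OF cl_eq_word_Cons_swap cl_eq_diff[OF cl_eq_refl]])
      then show ?thesis
        using ordered_lift_cliff_insert_less[OF 3 less.prems(1) S'(3,4)] S'(1) ordered_S by (simp add: polar_commute)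
    qed
  qed
qed

lemma cl_eq_word_ordered_lift:
  "set ws \<subseteq> span (set es) \<Longrightarrow> cl_eq (word ws) (ordered_lift (word_action es ws (ext_monomial {})))"
proof (induction ws)
  case Nil
  then show ?case by (simp add: ordered_lift_empty cl_eq_refl)
next
  case (Cons v ws)
  let ?g = "word_action es ws (ext_monomial {})" and ?P = "Pow {..<length es}" and ?c = "coord es v"
  have v: "v \<in> span (set es)" and ws: "set ws \<subseteq> span (set es)" using Cons.prems by auto
  have "ext_monomial {} T \<noteq> 0 \<Longrightarrow> T \<subseteq> indices (set es)" for T
    by (simp add: ext_monomial_def split: if_splits)
  from word_action_support[OF order_refl ws this]
  have g_support: "?g T \<noteq> 0 \<Longrightarrow> T \<subseteq> {..<length es}" for T
    by (simp add: indices_set)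
  have "cl_eq (word (v # ws)) (\<lambda>w. \<Sum>j<length es. ?c j * word (es!j # ws) w)"
    using cl_eq_word_Cons_sum[where K="{..<length es}" and c="?c" and x="(!) es" and l=ws]
      coord_expansion[OF independent_es distinct_es v] by simp
  also have "cl_eq \<dots> (\<lambda>w. \<Sum>j<length es. ?c j * (\<Sum>S\<in>?P. ?g S * word (es!j # ordered_word S) w))"
  proof (intro cl_eq_sum cl_eq_scale)
    fix j
    show "cl_eq (word (es!j # ws)) (\<lambda>w. \<Sum>S\<in>?P. ?g S * word (es!j # ordered_word S) w)"
      using cl_eq_fmul_word_left[OF Cons.IH[OF ws], of "[es!j]"]
      by (simp add: ordered_lift_def fmul_word_left_sum fmul_word_left_scale fmul_word_word)
  qed
  also have "cl_eq \<dots> (\<lambda>w. \<Sum>j<length es. ?c j * (\<Sum>S\<in>?P. ?g S * ordered_lift (cliff j (ext_monomial S)) w))"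
    by (intro cl_eq_sum cl_eq_scale cl_eq_word_Cons_ordered) auto
  also have "(\<lambda>w. \<Sum>j<length es. ?c j * (\<Sum>S\<in>?P. ?g S * ordered_lift (cliff j (ext_monomial S)) w))
      = ordered_lift (word_action es (v # ws) (ext_monomial {}))"
    using g_support
    by (simp add: clifford_action_def chevalley_expansion[of "{..<length es}"] ordered_lift_sum ordered_lift_scale)
  finally show ?case .
qed

text \<open>The spanning half of the basis theorem for the Clifford algebra of span es.\<close>

lemma cl_eq_ordered_lift_free_action:
  assumes "fin_supp p" "\<And>w. p w \<noteq> 0 \<Longrightarrow> set w \<subseteq> span (set es)"
  shows "cl_eq p (ordered_lift (free_action es p (ext_monomial {})))"
proof -
  have "cl_eq (\<lambda>u. \<Sum>w | p w \<noteq> 0. p w * word w u)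
      (\<lambda>u. \<Sum>w | p w \<noteq> 0. p w * ordered_lift (word_action es w (ext_monomial {})) u)"
    by (intro cl_eq_sum cl_eq_scale cl_eq_word_ordered_lift assms(2)) auto
  then show ?thesis
    using word_expansion[OF assms(1)] by (simp add: free_action_def ordered_lift_sum ordered_lift_scale)
qed

lemma cl_eq_scalar_if_supports_disjoint:
  assumes "fin_supp p" "P \<subseteq> set es" "\<And>w. p w \<noteq> 0 \<Longrightarrow> set w \<subseteq> span P"
    and "fin_supp q" "Q \<subseteq> set es" "\<And>w. q w \<noteq> 0 \<Longrightarrow> set w \<subseteq> span Q"
    and "P \<inter> Q = {}" "free_action es p (ext_monomial {}) = free_action es q (ext_monomial {})"
  shows "cl_eq p (\<lambda>w. free_action es p (ext_monomial {}) {} * word [] w)"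
proof -
  let ?g = "free_action es p (ext_monomial {})"
  have "T = {}" if "?g T \<noteq> 0" for T
    using free_action_support[OF assms(2,3) that] free_action_support[OF assms(5,6), where T=T] that assms(7,8)
    by (auto simp: indices_def)
  then have "?g = (\<lambda>T. ?g {} * ext_monomial {} T)"
    by (auto simp: fun_eq_iff ext_monomial_def)
  then have "ordered_lift ?g = (\<lambda>w. ?g {} * word [] w)"
    by (metis ordered_lift_scale ordered_lift_empty)
  moreover have "cl_eq p (ordered_lift ?g)"
    using cl_eq_ordered_lift_free_action[OF assms(1)] assms(3) span_mono[OF assms(2)] by blast
  ultimately show ?thesis by simp
qed

end

section \<open>Descending chains of subspaces\<close>

context vector_space
begin

lemma independent_Un_if_span_Int_trivial:
  assumes "finite B" "independent A" "independent B" "span A \<inter> span B \<subseteq> {0}"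
  shows "independent (A \<union> B)"
  using assms
proof (induction B rule: finite_induct)
  case empty
  then show ?case by simp
next
  case (insert b B)
  have B: "independent B" using insert.prems(2) by (rule independent_mono) auto
  have "span A \<inter> span B \<subseteq> {0}" using insert.prems(3) span_mono[of B "insert b B"] by blast
  with insert.prems(1) B have IH: "independent (A \<union> B)" by (rule insert.IH)
  have "b \<notin> span (A \<union> B)"
  proof
    assume "b \<in> span (A \<union> B)"
    then obtain x y where xy: "b = x + y" "x \<in> span A" "y \<in> span B" by (auto simp: span_Un)
    have "x = b - y" using xy by (simp add: algebra_simps)
    moreover have "b - y \<in> span (insert b B)"
      using span_diff[OF span_base[of b "insert b B"]] span_mono[of B "insert b B"] xy(3) by auto
    ultimately have "x = 0" using xy(2) insert.prems(3) by auto
    moreover have "b \<notin> span B" using insert.prems(2) insert.hyps(2) by (simp add: independent_insert)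
    ultimately show False using xy by simp
  qed
  then show ?case using IH by (simp add: independent_insertI)
qed

lemma dim_less_if_not_subset:
  assumes "subspace A" "A \<subseteq> B" "B \<subseteq> span L" "finite L" "x \<in> B" "x \<notin> A"
  shows "dim A < dim B"
proof -
  obtain BA where BA: "BA \<subseteq> A" "independent BA" "A \<subseteq> span BA" "card BA = dim A" by (rule basis_exists)
  obtain BB where BB: "BB \<subseteq> B" "independent BB" "B \<subseteq> span BB" "card BB = dim B" by (rule basis_exists)
  have x: "x \<notin> span BA" using span_minimal[OF BA(1) assms(1)] assms(6) by auto
  have "finite BB" using independent_span_bound[OF assms(4) BB(2)] BB(1) assms(3) by auto
  moreover have "insert x BA \<subseteq> span BB" using BB(3) BA(1) assms(2,5) by auto
  ultimately have "card (insert x BA) \<le> card BB" "finite BA"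
    using independent_span_bound[OF _ independent_insertI[OF x BA(2)]] by auto
  moreover have "x \<notin> BA" using x span_base by blast
  ultimately show ?thesis using BA(4) BB(4) by simp
qed

text \<open>The dimensions of the subspaces span L \<inter> V i are bounded by |L|; at an index of minimal
  dimension the intersection must already be trivial.\<close>

lemma span_Int_chain_trivial:
  assumes "\<And>i. subspace (V i)" "\<And>i. V (Suc i) \<subseteq> V i" "(\<Inter>i. V i) = {0}" "finite L"
  shows "\<exists>i. span L \<inter> V i \<subseteq> {0}"
proof -
  define D where "D i = span L \<inter> V i" for i
  have D: "subspace (D i)" for i unfolding D_def by (intro subspace_inter subspace_span assms(1))
  have V_anti: "i \<le> j \<Longrightarrow> V j \<subseteq> V i" for i j using lift_Suc_antimono_le[of V, OF assms(2)] by blast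
  obtain i0 where i0: "\<And>i. dim (D i0) \<le> dim (D i)"
    using ex_has_least_nat[where P="\<lambda>_. True" and m="\<lambda>i. dim (D i)" and k=0] by auto
  have "D i0 \<subseteq> {0}"
  proof
    fix x assume x: "x \<in> D i0"
    show "x \<in> {0}"
    proof (rule ccontr)
      assume "x \<notin> {0}"
      then obtain j where "x \<notin> V j" using assms(3) by blast
      then have "x \<notin> D (max i0 j)" using V_anti[of j "max i0 j"] by (auto simp: D_def)
      moreover have "D (max i0 j) \<subseteq> D i0" using V_anti[of i0 "max i0 j"] by (auto simp: D_def)
      ultimately have "dim (D (max i0 j)) < dim (D i0)"
        using dim_less_if_not_subset[OF D _ _ assms(4) x] by (auto simp: D_def)
      then show False using i0[of "max i0 j"] by simp
    qed
  qed
  then show ?thesis unfolding D_def by blast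
qed

lemma independent_list_adapted:
  assumes "finite A" "finite B" "span A \<inter> span B \<subseteq> {0}" "finite Y"
  obtains P Q es where "P \<subseteq> A" "A \<subseteq> span P" "Q \<subseteq> B" "B \<subseteq> span Q" "P \<inter> Q = {}"
    and "distinct es" "independent (set es)" "P \<union> Q \<subseteq> set es" "Y \<subseteq> span (set es)"
proof -
  obtain P where P: "P \<subseteq> A" "independent P" "A \<subseteq> span P" by (rule maximal_independent_subset)
  obtain Q where Q: "Q \<subseteq> B" "independent Q" "B \<subseteq> span Q" by (rule maximal_independent_subset)
  have PQ: "span P \<inter> span Q \<subseteq> {0}" using assms(3) span_mono[OF P(1)] span_mono[OF Q(1)] by blast
  have disjoint: "P \<inter> Q = {}"
  proof -
    have "x = 0" if "x \<in> P" "x \<in> Q" for x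
      using that PQ span_base[of x P] span_base[of x Q] by blast
    then show ?thesis using P(2) dependent_zero by auto
  qed
  have fin: "finite P" "finite Q" using P(1) Q(1) assms(1,2) finite_subset by auto
  then have "independent (P \<union> Q)" using independent_Un_if_span_Int_trivial P(2) Q(2) PQ by blast
  then obtain C where C: "P \<union> Q \<subseteq> C" "C \<subseteq> P \<union> Q \<union> Y" "independent C" "P \<union> Q \<union> Y \<subseteq> span C"
    using maximal_independent_subset_extend[of "P \<union> Q" "P \<union> Q \<union> Y"] by auto
  moreover have "finite C" using C(2) fin assms(4) finite_subset by blast
  then obtain es where "set es = C" "distinct es" using finite_distinct_list by blast
  ultimately show ?thesis using that[OF P(1,3) Q(1,3) disjoint] by auto
qed

end

section \<open>Subalgebras generated by subspaces with trivial intersection\<close>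

lemma cl_scalars_subset_cl_sub: "cl_scalars scale f \<subseteq> cl_sub scale f W"
proof -
  have "fin_supp (fsmult c (word []))" "\<And>w. fsmult c (word []) w \<noteq> 0 \<Longrightarrow> set w \<subseteq> W" for c
    using fin_supp_scale_word[of c "[]"] by (auto simp: fsmult_def word_def split: if_splits)
  then show ?thesis by (auto simp: cl_scalars_def cl_sub_def intro!: imageI)
qed

lemma cl_sub_finite_letters:
  assumes "x \<in> cl_sub scale f W"
  obtains L where "finite L" "L \<subseteq> W" "x \<in> cl_sub scale f L"
proof -
  obtain p where p: "fin_supp p" "\<And>w. p w \<noteq> 0 \<Longrightarrow> set w \<subseteq> W" "x = cl_class scale f p"
    using assms by (auto simp: cl_sub_def)
  let ?L = "\<Union> (set ` {w. p w \<noteq> 0})"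
  have "finite ?L" using p(1) by (simp add: fin_supp_def)
  moreover have "?L \<subseteq> W" using p(2) by blast
  moreover have "x \<in> cl_sub scale f ?L" using p by (auto simp: cl_sub_def)
  ultimately show ?thesis using that by blast
qed

context quadratic_space
begin

lemma cl_class_eq_iff:
  assumes "fin_supp q"
  shows "cl_class scale f p = cl_class scale f q \<longleftrightarrow> cl_eq p q"
proof
  assume eq: "cl_class scale f p = cl_class scale f q"
  have "q \<in> cl_class scale f q"
    using assms cl_eq_refl by (simp add: cl_class_def cl_eq_def fsub_def)
  then have "q \<in> cl_class scale f p" by (simp only: eq)
  then show "cl_eq p q" by (simp add: cl_class_def cl_eq_def fsub_def)
next
  assume "cl_eq p q"
  then have "fsub p r \<in> ideal \<longleftrightarrow> fsub q r \<in> ideal" for r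
    using ideal_diff[of "fsub p r" "\<lambda>w. p w - q w"] ideal_add[of "fsub q r" "\<lambda>w. p w - q w"]
    by (auto simp: cl_eq_def fsub_def)
  then show "cl_class scale f p = cl_class scale f q" by (simp add: cl_class_def)
qed

lemma cl_eq_scalar_if_span_Int_trivial:
  assumes p: "fin_supp p" "\<And>w. p w \<noteq> 0 \<Longrightarrow> set w \<subseteq> U"
    and q: "fin_supp q" "\<And>w. q w \<noteq> 0 \<Longrightarrow> set w \<subseteq> W"
    and UW: "span U \<inter> span W \<subseteq> {0}" and "cl_eq p q"
  obtains c where "cl_eq p (\<lambda>w. c * word [] w)"
proof -
  define Lp where "Lp = \<Union> (set ` {w. p w \<noteq> 0})"
  define Lq where "Lq = \<Union> (set ` {w. q w \<noteq> 0})"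
  have fin: "finite Lp" "finite Lq" using p(1) q(1) by (simp_all add: Lp_def Lq_def fin_supp_def)
  have "Lp \<subseteq> U" "Lq \<subseteq> W" using p(2) q(2) by (auto simp: Lp_def Lq_def)
  then have Lpq: "span Lp \<inter> span Lq \<subseteq> {0}" using UW span_mono[of Lp U] span_mono[of Lq W] by blast
  have "(\<lambda>w. p w - q w) \<in> ideal" using \<open>cl_eq p q\<close> by (simp add: cl_eq_def)
  then obtain X where X: "finite X" "\<forall>es. independent (set es) \<and> distinct es \<and> X \<subseteq> span (set es)
      \<longrightarrow> free_action es (\<lambda>w. p w - q w) = (\<lambda>g T. 0)"
    using free_action_ideal by blast
  obtain P Q es where P: "P \<subseteq> Lp" "Lp \<subseteq> span P" and Q: "Q \<subseteq> Lq" "Lq \<subseteq> span Q"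
    and disjoint: "P \<inter> Q = {}"
    and es: "distinct es" "independent (set es)" "P \<union> Q \<subseteq> set es" "X \<subseteq> span (set es)"
    by (rule independent_list_adapted[OF fin Lpq X(1)])
  interpret quadratic_space_basis scale f es
    using es(1,2) by unfold_locales
  have diff: "free_action es (\<lambda>w. p w - q w) = (\<lambda>g T. 0)" using X(2) es(1,2,4) by blast
  have same_action: "free_action es p (ext_monomial {}) = free_action es q (ext_monomial {})"
  proof
    fix T
    show "free_action es p (ext_monomial {}) T = free_action es q (ext_monomial {}) T"
      using fun_cong[OF fun_cong[OF diff, of "ext_monomial {}"], of T]
        free_action_diff[OF p(1) q(1), of es "ext_monomial {}" T]
      by simp
  qed
  have p_letters: "\<And>w. p w \<noteq> 0 \<Longrightarrow> set w \<subseteq> span P"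
    and q_letters: "\<And>w. q w \<noteq> 0 \<Longrightarrow> set w \<subseteq> span Q"
    using P(2) Q(2) by (auto simp: Lp_def Lq_def)
  have "P \<subseteq> set es" "Q \<subseteq> set es" using es(3) by auto
  from cl_eq_scalar_if_supports_disjoint[OF p(1) this(1) p_letters q(1) this(2) q_letters disjoint same_action]
  show ?thesis by (rule that)
qed

lemma cl_sub_Int_subset_cl_scalars:
  assumes "span U \<inter> span W \<subseteq> {0}"
  shows "cl_sub scale f U \<inter> cl_sub scale f W \<subseteq> cl_scalars scale f"
proof
  fix x assume x: "x \<in> cl_sub scale f U \<inter> cl_sub scale f W"
  obtain p where p: "fin_supp p" "\<And>w. p w \<noteq> 0 \<Longrightarrow> set w \<subseteq> U" "x = cl_class scale f p"
    using x unfolding cl_sub_def by blast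
  obtain q where q: "fin_supp q" "\<And>w. q w \<noteq> 0 \<Longrightarrow> set w \<subseteq> W" "x = cl_class scale f q"
    using x unfolding cl_sub_def by blast
  have "cl_eq p q" using p(3) q(3) cl_class_eq_iff[OF q(1), of p] by simp
  then obtain c where "cl_eq p (\<lambda>w. c * word [] w)"
    using cl_eq_scalar_if_span_Int_trivial[OF p(1,2) q(1,2) assms] by blast
  then have "x = cl_class scale f (fsmult c (word []))"
    using p(3) cl_class_eq_iff[OF fin_supp_scale_word, of p c "[]"] by (simp add: fsmult_def)
  then show "x \<in> cl_scalars scale f" by (simp add: cl_scalars_def)
qed

end

theorem lemma3:
  fixes scale :: "complex \<Rightarrow> 'v::ab_group_add \<Rightarrow> 'v"
    and f :: "'v \<Rightarrow> complex"
    and V :: "nat \<Rightarrow> 'v set"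
  assumes "vector_space scale"
    and "quadratic_form scale f"
    and "\<And>i. module.subspace scale (V i)"
    and "V 0 = UNIV"
    and "\<And>i. V (Suc i) \<subseteq> V i"
    and "\<And>i. \<exists>S. finite S \<and> module.span scale (S \<union> V i) = UNIV"
    and "(\<Inter>i. V i) = {0}"
  shows "(\<Inter>i. cl_sub scale f (V i)) = cl_scalars scale f"
proof -
  interpret quadratic_space scale f
    using assms(1,2) by (simp add: quadratic_space_def quadratic_space_axioms_def)
  have "x \<in> cl_scalars scale f" if x: "x \<in> (\<Inter>i. cl_sub scale f (V i))" for x
  proof -
    have "x \<in> cl_sub scale f (V 0)" using x by blast
    then obtain L where L: "finite L" "x \<in> cl_sub scale f L" by (rule cl_sub_finite_letters)
    obtain i where "span L \<inter> V i \<subseteq> {0}"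
      using span_Int_chain_trivial[OF assms(3,5,7) L(1)] by blast
    moreover have "span (V i) = V i" using assms(3) by (simp add: span_eq_iff)
    ultimately have "span L \<inter> span (V i) \<subseteq> {0}" by (simp only:)
    then have "cl_sub scale f L \<inter> cl_sub scale f (V i) \<subseteq> cl_scalars scale f"
      by (rule cl_sub_Int_subset_cl_scalars)
    moreover have "x \<in> cl_sub scale f (V i)" using x by blast
    ultimately show ?thesis using L(2) by blast
  qed
  then show ?thesis using cl_scalars_subset_cl_sub by blast
qed

end
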